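(* Let $n\in\mathbb{N}_0$, $P_n\in M_n$ and $s\in\mathbb{N}$. Then $D_hH_{s,\mu,P_n}=C(s,\mu,n)\,H_{s-1,\mu,P_n}$, where $C(s,\mu,n)=2s$ if $s$ is even and $C(s,\mu,n)=2(s+\mu+2n-1)$ if $s$ is odd.
   Context: Let $d\ge 2$. $\mathbb{R}_{0,d}$ is the real Clifford algebra generated by $e_1,\dots,e_d$ with $e_ie_j+e_je_i=-2\delta_{ij}$; vectors $x$ are identified with $\sum_ix_ie_i$. $R$ is a root system with reflection group $W$, positive subsystem $R_+$, $\kappa:R\to[0,\infty)$ a $W$-invariant multiplicity function with $\gamma_\kappa=\sum_{\alpha\in R_+}\kappa(\alpha)>0$, $\mu=2\gamma_\kappa+d$. Dunkl operators $T_if(x)=\partial_{x_i}f(x)+\sum_{\alpha\in R_+}\kappa(\alpha)\frac{f(x)-f(\sigma_\alpha x)}{\langle\alpha,x\rangle}\alpha_i$; Dunkl–Dirac operator $D_h=\sum_ie_iT_i$. $M_n$: $\mathbb{C}\otimes\mathbb{R}_{0,d}$-valued homogeneous polynomials of degree $n$ with $D_hP=0$. $D_+f=D_hf-2xf$, and $H_{s,\mu,P_n}=(D_+)^sP_n$. *)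

theory Defs
  imports "HOL-Analysis.Analysis"
begin

text \<open>Dimension d = CARD('n); the generators e_i of the Clifford algebra are indexed by
  the finite linearly ordered type 'n.  An element of the complexified Clifford algebra
  is given by its coefficients on the basis blades e_A (A a subset of 'n, product of the
  e_i, i in A, in increasing order).\<close>

type_synonym 'n cl = "'n set \<Rightarrow> complex"

definition blade_sign :: "('n::{finite,linorder}) set \<Rightarrow> 'n set \<Rightarrow> complex" where
  "blade_sign A B = (-1) ^ (card {(a, b). a \<in> A \<and> b \<in> B \<and> b < a} + card (A \<inter> B))"

definition cl_mult :: "('n::{finite,linorder}) cl \<Rightarrow> 'n cl \<Rightarrow> 'n cl" where
  "cl_mult u v = (\<lambda>C. \<Sum>A\<in>UNIV. \<Sum>B\<in>UNIV.
      if (A - B) \<union> (B - A) = C then blade_sign A B * u A * v B else 0)"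

definition cl_gen :: "'n \<Rightarrow> 'n cl" where
  "cl_gen i = (\<lambda>A. if A = {i} then 1 else 0)"

definition cl_vec :: "(real, 'n::{finite,linorder}) vec \<Rightarrow> 'n cl" where
  "cl_vec x = (\<lambda>A. \<Sum>i\<in>UNIV. if A = {i} then complex_of_real (x $ i) else 0)"

definition homog_poly :: "nat \<Rightarrow> ((real, 'n::{finite,linorder}) vec \<Rightarrow> 'n cl) \<Rightarrow> bool" where
  "homog_poly n f \<longleftrightarrow> (\<exists>c :: ('n \<Rightarrow> nat) \<Rightarrow> 'n cl. \<forall>x.
      f x = (\<lambda>A. \<Sum>\<alpha>\<in>{\<alpha>. (\<Sum>i\<in>UNIV. \<alpha> i) = n}.
                 c \<alpha> A * complex_of_real (\<Prod>i\<in>UNIV. (x $ i) ^ (\<alpha> i))))"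

definition dir_deriv :: "(real, 'n::{finite,linorder}) vec \<Rightarrow> ((real, 'n) vec \<Rightarrow> 'n cl) \<Rightarrow> (real, 'n) vec \<Rightarrow> 'n cl" where
  "dir_deriv v f x = (\<lambda>A. vector_derivative (\<lambda>t::real. f (x + t *\<^sub>R v) A) (at (0::real)))"

definition partial :: "('n::{finite,linorder}) \<Rightarrow> ((real, 'n) vec \<Rightarrow> 'n cl) \<Rightarrow> (real, 'n) vec \<Rightarrow> 'n cl" where
  "partial i f x = dir_deriv (axis i 1) f x"

definition refl :: "(real, 'n::{finite,linorder}) vec \<Rightarrow> (real, 'n) vec \<Rightarrow> (real, 'n) vec" where
  "refl \<alpha> x = x - (2 * (\<alpha> \<bullet> x) / (\<alpha> \<bullet> \<alpha>)) *\<^sub>R \<alpha>"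

definition root_system :: "((real, 'n::{finite,linorder}) vec) set \<Rightarrow> bool" where
  "root_system R \<longleftrightarrow> finite R \<and> 0 \<notin> R \<and>
     (\<forall>\<alpha>\<in>R. \<forall>c::real. c *\<^sub>R \<alpha> \<in> R \<longleftrightarrow> c = 1 \<or> c = -1) \<and>
     (\<forall>\<alpha>\<in>R. \<forall>\<beta>\<in>R. refl \<alpha> \<beta> \<in> R)"

definition positive_subsystem :: "((real, 'n::{finite,linorder}) vec) set \<Rightarrow> ((real, 'n) vec) set \<Rightarrow> bool" where
  "positive_subsystem R Rp \<longleftrightarrow>
     (\<exists>\<beta>. (\<forall>\<alpha>\<in>R. \<alpha> \<bullet> \<beta> \<noteq> 0) \<and> Rp = {\<alpha>\<in>R. \<alpha> \<bullet> \<beta> > 0})"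

inductive_set refl_group :: "((real, 'n::{finite,linorder}) vec) set \<Rightarrow> ((real, 'n) vec \<Rightarrow> (real, 'n) vec) set"
  for R where
    id: "id \<in> refl_group R"
  | step: "w \<in> refl_group R \<Longrightarrow> \<alpha> \<in> R \<Longrightarrow> refl \<alpha> \<circ> w \<in> refl_group R"

definition multiplicity :: "((real, 'n::{finite,linorder}) vec) set \<Rightarrow> ((real, 'n) vec \<Rightarrow> real) \<Rightarrow> bool" where
  "multiplicity R \<kappa> \<longleftrightarrow> (\<forall>\<alpha>\<in>R. \<kappa> \<alpha> \<ge> 0) \<and>
     (\<forall>w\<in>refl_group R. \<forall>\<alpha>\<in>R. \<kappa> (w \<alpha>) = \<kappa> \<alpha>)"

definition gamma_k :: "((real, 'n::{finite,linorder}) vec) set \<Rightarrow> ((real, 'n) vec \<Rightarrow> real) \<Rightarrow> real" where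
  "gamma_k Rp \<kappa> = (\<Sum>\<alpha>\<in>Rp. \<kappa> \<alpha>)"

text \<open>Difference quotient (f(x) - f(sigma_alpha x)) / <alpha,x>, extended continuously
  to the hyperplane <alpha,x> = 0 (where, for C^1 f, the limit is 2/|alpha|^2 d_alpha f(x)).\<close>
definition diff_quot :: "(real, 'n::{finite,linorder}) vec \<Rightarrow> ((real, 'n) vec \<Rightarrow> 'n cl) \<Rightarrow> (real, 'n) vec \<Rightarrow> 'n cl" where
  "diff_quot \<alpha> f x =
     (if \<alpha> \<bullet> x \<noteq> 0 then (\<lambda>A. (f x A - f (refl \<alpha> x) A) / complex_of_real (\<alpha> \<bullet> x))
      else (\<lambda>A. complex_of_real (2 / (\<alpha> \<bullet> \<alpha>)) * dir_deriv \<alpha> f x A))"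

definition dunkl :: "((real, 'n::{finite,linorder}) vec) set \<Rightarrow> ((real, 'n) vec \<Rightarrow> real) \<Rightarrow> 'n
     \<Rightarrow> ((real, 'n) vec \<Rightarrow> 'n cl) \<Rightarrow> (real, 'n) vec \<Rightarrow> 'n cl" where
  "dunkl Rp \<kappa> i f x = (\<lambda>A. partial i f x A +
      (\<Sum>\<alpha>\<in>Rp. complex_of_real (\<kappa> \<alpha> * \<alpha> $ i) * diff_quot \<alpha> f x A))"

definition dunkl_dirac :: "((real, 'n::{finite,linorder}) vec) set \<Rightarrow> ((real, 'n) vec \<Rightarrow> real)
     \<Rightarrow> ((real, 'n) vec \<Rightarrow> 'n cl) \<Rightarrow> (real, 'n) vec \<Rightarrow> 'n cl" where
  "dunkl_dirac Rp \<kappa> f x = (\<lambda>A. \<Sum>i\<in>UNIV. cl_mult (cl_gen i) (dunkl Rp \<kappa> i f x) A)"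

definition D_plus :: "((real, 'n::{finite,linorder}) vec) set \<Rightarrow> ((real, 'n) vec \<Rightarrow> real)
     \<Rightarrow> ((real, 'n) vec \<Rightarrow> 'n cl) \<Rightarrow> (real, 'n) vec \<Rightarrow> 'n cl" where
  "D_plus Rp \<kappa> f x = (\<lambda>A. dunkl_dirac Rp \<kappa> f x A - 2 * cl_mult (cl_vec x) (f x) A)"

definition H_fun :: "((real, 'n::{finite,linorder}) vec) set \<Rightarrow> ((real, 'n) vec \<Rightarrow> real) \<Rightarrow> nat
     \<Rightarrow> ((real, 'n) vec \<Rightarrow> 'n cl) \<Rightarrow> (real, 'n) vec \<Rightarrow> 'n cl" where
  "H_fun Rp \<kappa> s P = (D_plus Rp \<kappa> ^^ s) P"

definition monogenic :: "((real, 'n::{finite,linorder}) vec) set \<Rightarrow> ((real, 'n) vec \<Rightarrow> real) \<Rightarrow> nat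
     \<Rightarrow> ((real, 'n) vec \<Rightarrow> 'n cl) \<Rightarrow> bool" where
  "monogenic Rp \<kappa> n P \<longleftrightarrow> homog_poly n P \<and> (\<forall>x. dunkl_dirac Rp \<kappa> P x = (\<lambda>_. 0))"

end

theory Submission
  imports Defs
begin

text \<open>
  Write mu = d + 2 gamma and nu = mu + 2n.  For a Dunkl-monogenic homogeneous
  polynomial P of degree n consider the ladder of functions
    F_(2m) = |x|^(2m) P,   F_(2m+1) = |x|^(2m) x P.
  Two commutation rules for the Dunkl-Dirac operator,
    D_h(x g) = - x D_h g - mu g - 2 E g        (E the Euler operator),
    D_h(|x|^(2m) g) = |x|^(2m) D_h g + 2m |x|^(2m-2) x g,
  together with D_h P = 0 and E P = n P give D_h F_j = down_j F_(j-1) and x F_j = +-F_(j+1)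
  with explicit real numbers down_j.  Hence H_s = (D_h - 2x)^s P = sum_j c_(s,j) F_j, where the
  coefficient sequences c_s obey a recursion by a lowering and a raising map on sequences.
  The theorem becomes an identity between these sequences, proved by a joint induction
  with a second identity expressing that (N - s) c_s is a multiple of c_(s-2) (N the degree).
\<close>

section \<open>Left multiplication by generators and by vectors\<close>

text \<open>Multiplying a basis blade e_C from the left by e_i toggles i in C; the resulting
  sign only depends on i and C.  We make this explicit, since every Clifford-algebra
  computation in the proof is a left multiplication by a vector.\<close>

definition flip :: "'a \<Rightarrow> 'a set \<Rightarrow> 'a set" where
  "flip i C = (if i \<in> C then C - {i} else insert i C)"

definition gen_sign :: "'n::linorder \<Rightarrow> 'n set \<Rightarrow> complex" where
  "gen_sign i C = (-1) ^ card {c\<in>C. c < i} * (if i \<in> C then 1 else -1)"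

definition gen_mult :: "'n::{finite,linorder} \<Rightarrow> 'n cl \<Rightarrow> 'n cl" where
  "gen_mult i u = (\<lambda>C. gen_sign i C * u (flip i C))"

definition vec_mult :: "(real, 'n::{finite,linorder}) vec \<Rightarrow> 'n cl \<Rightarrow> 'n cl" where
  "vec_mult a u = (\<lambda>C. \<Sum>k\<in>UNIV. complex_of_real (a $ k) * gen_mult k u C)"

lemma flip_flip [simp]: "flip i (flip i C) = C"
  unfolding flip_def by auto

lemma flip_comm: "flip i (flip j C) = flip j (flip i C)"
  unfolding flip_def by auto

lemma flip_mem: "j \<in> flip i C \<longleftrightarrow> (if j = i then i \<notin> C else j \<in> C)"
  unfolding flip_def by auto

lemma blade_sign_gen:
  fixes B :: "'n::{finite,linorder} set"
  shows "blade_sign {i} B = (-1) ^ card {b\<in>B. b < i} * (if i \<in> B then -1 else 1)"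
proof -
  have "{(a, b). a \<in> {i} \<and> b \<in> B \<and> b < a} = (\<lambda>b. (i, b)) ` {b\<in>B. b < i}" by auto
  then have "card {(a, b). a \<in> {i} \<and> b \<in> B \<and> b < a} = card {b\<in>B. b < i}"
    by (simp add: card_image inj_on_def)
  moreover have "card ({i} \<inter> B) = (if i \<in> B then 1 else 0)" by auto
  ultimately show ?thesis unfolding blade_sign_def by (auto simp: power_add)
qed

lemma cl_mult_gen: "cl_mult (cl_gen i) u = gen_mult i u"
proof
  fix C
  have symdiff: "({i} - B) \<union> (B - {i}) = C \<longleftrightarrow> B = flip i C" for B
    unfolding flip_def by auto
  have below: "{b\<in>flip i C. b < i} = {c\<in>C. c < i}"
    unfolding flip_def by auto
  have "cl_mult (cl_gen i) u C = (\<Sum>A\<in>UNIV. \<Sum>B\<in>UNIV.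
      if A = {i} then (if B = flip i C then blade_sign {i} B * u B else 0) else 0)"
    unfolding cl_mult_def cl_gen_def by (intro sum.cong refl) (auto simp: symdiff)
  also have "\<dots> = (\<Sum>A\<in>UNIV. if A = {i} then blade_sign {i} (flip i C) * u (flip i C) else 0)"
    by (intro sum.cong refl) (simp add: sum.delta)
  also have "\<dots> = blade_sign {i} (flip i C) * u (flip i C)"
    by (simp add: sum.delta)
  also have "\<dots> = gen_mult i u C"
    unfolding gen_mult_def gen_sign_def blade_sign_gen below by (auto simp: flip_mem)
  finally show "cl_mult (cl_gen i) u C = gen_mult i u C" .
qed

lemma cl_mult_lincomb_left:
  "cl_mult (\<lambda>A. \<Sum>k\<in>K. c k * f k A) u C = (\<Sum>k\<in>K. c k * cl_mult (f k) u C)"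
proof -
  have "cl_mult (\<lambda>A. \<Sum>k\<in>K. c k * f k A) u C = (\<Sum>A\<in>UNIV. \<Sum>B\<in>UNIV. \<Sum>k\<in>K.
      c k * (if (A - B) \<union> (B - A) = C then blade_sign A B * f k A * u B else 0))"
    unfolding cl_mult_def
    by (intro sum.cong refl) (simp add: sum_distrib_left sum_distrib_right mult.assoc mult.left_commute[of "blade_sign _ _"])
  also have "\<dots> = (\<Sum>k\<in>K. \<Sum>A\<in>UNIV. \<Sum>B\<in>UNIV.
      c k * (if (A - B) \<union> (B - A) = C then blade_sign A B * f k A * u B else 0))"
    by (subst sum.swap, subst (2) sum.swap, rule refl)
  finally show ?thesis unfolding cl_mult_def by (simp add: sum_distrib_left)
qed

lemma cl_mult_vec: "cl_mult (cl_vec x) u = vec_mult x u"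
proof
  fix C
  have "cl_vec x = (\<lambda>A. \<Sum>k\<in>UNIV. complex_of_real (x $ k) * cl_gen k A)"
    unfolding cl_vec_def cl_gen_def by (auto intro!: sum.cong)
  then show "cl_mult (cl_vec x) u C = vec_mult x u C"
    unfolding vec_mult_def by (simp only: cl_mult_lincomb_left cl_mult_gen)
qed

lemma card_flip_sign:
  assumes "finite S"
  shows "(-1::complex) ^ card (flip i S) = - ((-1) ^ card S)"
proof (cases "i \<in> S")
  case True
  then have "card S = Suc (card (S - {i}))" using assms by (metis card_Suc_Diff1)
  then have "(-1::complex) ^ card S = - ((-1) ^ card (S - {i}))" by simp
  then show ?thesis using True by (simp add: flip_def)
next
  case False
  then show ?thesis using assms by (simp add: flip_def)
qed

lemma gen_sign_flip:
  fixes i j :: "'n::{finite,linorder}"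
  assumes "j \<noteq> i"
  shows "gen_sign j (flip i C) = (if i < j then -1 else 1) * gen_sign j C"
proof (cases "i < j")
  case True
  then have "{c\<in>flip i C. c < j} = flip i {c\<in>C. c < j}" unfolding flip_def by auto
  then show ?thesis using True assms unfolding gen_sign_def by (simp add: card_flip_sign flip_mem)
next
  case False
  then have "{c\<in>flip i C. c < j} = {c\<in>C. c < j}" using assms unfolding flip_def by auto
  then show ?thesis using False assms unfolding gen_sign_def by (simp add: flip_mem)
qed

lemma gen_mult_anticomm:
  "gen_mult i (gen_mult j u) C + gen_mult j (gen_mult i u) C = (if i = j then -2 * u C else 0)"
proof (cases "i = j")
  case True
  have "{c\<in>flip i C. c < i} = {c\<in>C. c < i}"
    unfolding flip_def by auto
  then have "gen_sign i C * gen_sign i (flip i C) = -1"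
    unfolding gen_sign_def by (auto simp: flip_mem power_add[symmetric] mult_2[symmetric])
  then show ?thesis using True unfolding gen_mult_def by (simp add: algebra_simps)
next
  case False
  then have "i < j \<or> j < i" by auto
  then show ?thesis using False unfolding gen_mult_def
    by (auto simp: gen_sign_flip flip_comm[of i j] algebra_simps)
qed

lemma gen_mult_square: "gen_mult i (gen_mult i w) C = - w C"
proof -
  have half: "z + z = - 2 * u \<Longrightarrow> z = - u" for z u :: complex
    by (simp add: algebra_simps)
  show ?thesis using gen_mult_anticomm[of i i w C] by (intro half) simp
qed

lemma gen_mult_add [simp]: "gen_mult i (\<lambda>B. u B + w B) C = gen_mult i u C + gen_mult i w C"
  unfolding gen_mult_def by (simp add: algebra_simps)
lemma gen_mult_diff [simp]: "gen_mult i (\<lambda>B. u B - w B) C = gen_mult i u C - gen_mult i w C"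
  unfolding gen_mult_def by (simp add: algebra_simps)
lemma gen_mult_scale [simp]: "gen_mult i (\<lambda>B. c * u B) C = c * gen_mult i u C"
  unfolding gen_mult_def by (simp add: algebra_simps)
lemma gen_mult_divide [simp]: "gen_mult i (\<lambda>B. u B / c) C = gen_mult i u C / c"
  unfolding gen_mult_def by simp
lemma gen_mult_sum [simp]: "gen_mult i (\<lambda>B. \<Sum>j\<in>J. f j B) C = (\<Sum>j\<in>J. gen_mult i (f j) C)"
  unfolding gen_mult_def by (simp add: sum_distrib_left)

lemma vec_mult_add [simp]: "vec_mult a (\<lambda>B. u B + w B) C = vec_mult a u C + vec_mult a w C"
  unfolding vec_mult_def by (simp add: algebra_simps sum.distrib)
lemma vec_mult_diff [simp]: "vec_mult a (\<lambda>B. u B - w B) C = vec_mult a u C - vec_mult a w C"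
  unfolding vec_mult_def by (simp add: algebra_simps sum_subtractf)
lemma vec_mult_scale [simp]: "vec_mult a (\<lambda>B. c * u B) C = c * vec_mult a u C"
  unfolding vec_mult_def by (simp add: algebra_simps sum_distrib_left)
lemma vec_mult_sum [simp]: "vec_mult a (\<lambda>B. \<Sum>j\<in>J. f j B) C = (\<Sum>j\<in>J. vec_mult a (f j) C)"
  unfolding vec_mult_def by (simp add: sum_distrib_left sum.swap[of _ J])
lemma vec_mult_divide [simp]: "vec_mult a (\<lambda>B. u B / c) C = vec_mult a u C / c"
  unfolding vec_mult_def by (simp add: algebra_simps sum_divide_distrib)
lemma vec_mult_zero [simp]: "vec_mult a (\<lambda>B. 0) C = 0"
  unfolding vec_mult_def gen_mult_def by simp

lemma vec_mult_vec_diff: "vec_mult (a - b) w C = vec_mult a w C - vec_mult b w C"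
  unfolding vec_mult_def by (simp add: algebra_simps sum_subtractf)
lemma vec_mult_vec_scale: "vec_mult (c *\<^sub>R a) w C = complex_of_real c * vec_mult a w C"
  unfolding vec_mult_def by (simp add: algebra_simps sum_distrib_left)
lemma vec_mult_axis: "vec_mult (axis i 1) w C = gen_mult i w C"
proof -
  have "complex_of_real (axis i 1 $ k) * gen_mult k w C = (if k = i then gen_mult k w C else 0)" for k
    by (simp add: axis_def)
  then show ?thesis unfolding vec_mult_def by simp
qed

lemma vec_mult_anticomm:
  "vec_mult a (vec_mult b u) C + vec_mult b (vec_mult a u) C
     = - 2 * complex_of_real (a \<bullet> b) * u C"
proof -
  have "vec_mult a (vec_mult b u) C + vec_mult b (vec_mult a u) C =
     (\<Sum>k\<in>UNIV. \<Sum>l\<in>UNIV. complex_of_real (a $ k) * complex_of_real (b $ l) *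
         (gen_mult k (gen_mult l u) C + gen_mult l (gen_mult k u) C))"
  proof -
    have gen_vec: "gen_mult k (vec_mult c u) C
        = (\<Sum>l\<in>UNIV. complex_of_real (c $ l) * gen_mult k (gen_mult l u) C)" for k c
      unfolding vec_mult_def by simp
    have "vec_mult a (vec_mult b u) C = (\<Sum>k\<in>UNIV. \<Sum>l\<in>UNIV.
        complex_of_real (a $ k) * complex_of_real (b $ l) * gen_mult k (gen_mult l u) C)"
      unfolding vec_mult_def[of a "vec_mult b u"] gen_vec by (simp add: sum_distrib_left mult.assoc)
    moreover have "vec_mult b (vec_mult a u) C = (\<Sum>k\<in>UNIV. \<Sum>l\<in>UNIV.
        complex_of_real (a $ k) * complex_of_real (b $ l) * gen_mult l (gen_mult k u) C)"
      unfolding vec_mult_def[of b "vec_mult a u"] gen_vec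
      by (subst sum.swap) (simp add: sum_distrib_left mult.assoc mult.left_commute)
    ultimately show ?thesis by (simp add: sum.distrib[symmetric] distrib_left)
  qed
  also have "\<dots> = (\<Sum>k\<in>UNIV. complex_of_real (a $ k) * complex_of_real (b $ k) * (-2 * u C))"
    unfolding gen_mult_anticomm by (simp add: if_distrib cong: if_cong)
  also have "\<dots> = - 2 * complex_of_real (a \<bullet> b) * u C"
    unfolding inner_vec_def by (simp add: sum_distrib_left sum_distrib_right algebra_simps)
  finally show ?thesis .
qed

lemma vec_mult_square: "vec_mult a (vec_mult a w) C = - complex_of_real (a \<bullet> a) * w C"
proof -
  have half: "z + z = - 2 * c * u \<Longrightarrow> z = - c * u" for z c u :: complex
    by (simp add: algebra_simps)
  show ?thesis by (rule half[OF vec_mult_anticomm])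
qed

lemma gen_vec_anticomm:
  "gen_mult i (vec_mult x w) C = - vec_mult x (gen_mult i w) C - 2 * complex_of_real (x $ i) * w C"
proof -
  have "vec_mult (axis i 1) (vec_mult x w) C + vec_mult x (vec_mult (axis i 1) w) C
      = - 2 * complex_of_real (x $ i) * w C"
    using vec_mult_anticomm[of "axis i 1" x w C] by (simp add: inner_axis')
  moreover have "vec_mult (axis i 1) w = gen_mult i w"
    using vec_mult_axis by blast
  ultimately have "gen_mult i (vec_mult x w) C + vec_mult x (gen_mult i w) C
      = - (2 * complex_of_real (x $ i) * w C)"
    by (simp add: vec_mult_axis)
  then show ?thesis by (metis add.commute add_diff_cancel_left' diff_minus_eq_add)
qed

section \<open>Smooth Clifford-valued functions and linearity of the Dunkl operators\<close>

definition cl_smooth :: "((real, 'n::{finite,linorder}) vec \<Rightarrow> 'n cl) \<Rightarrow> bool" where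
  "cl_smooth f \<longleftrightarrow> (\<forall>A x. (\<lambda>y. f y A) differentiable (at x))"

definition cl_deriv :: "(real, 'n::{finite,linorder}) vec \<Rightarrow> ((real, 'n) vec \<Rightarrow> 'n cl)
    \<Rightarrow> (real, 'n) vec \<Rightarrow> 'n cl" where
  "cl_deriv v f x = (\<lambda>A. frechet_derivative (\<lambda>y. f y A) (at x) v)"

lemma cl_smooth_has_derivative:
  "cl_smooth f \<Longrightarrow> ((\<lambda>y. f y A) has_derivative (\<lambda>v. cl_deriv v f x A)) (at x)"
  unfolding cl_smooth_def cl_deriv_def using frechet_derivative_works by blast

lemma cl_deriv_eqI: "((\<lambda>y. f y A) has_derivative D) (at x) \<Longrightarrow> cl_deriv v f x A = D v"
  unfolding cl_deriv_def using frechet_derivative_at by metis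

lemma dir_deriv_eqI:
  assumes "((\<lambda>y. f y A) has_derivative D) (at x)"
  shows "dir_deriv v f x A = D v"
proof -
  have line: "((\<lambda>t::real. x + t *\<^sub>R v) has_derivative (\<lambda>t. t *\<^sub>R v)) (at 0)"
    by (auto intro!: derivative_eq_intros)
  have "((\<lambda>y. f y A) has_derivative D) (at (x + 0 *\<^sub>R v))" using assms by simp
  then have "((\<lambda>t. f (x + t *\<^sub>R v) A) has_derivative (\<lambda>t. D (t *\<^sub>R v))) (at 0)"
    using diff_chain_at[OF line] by (simp add: o_def)
  moreover have "(\<lambda>t. D (t *\<^sub>R v)) = (\<lambda>t. t *\<^sub>R D v)"
    using linear_scale[OF has_derivative_linear[OF assms]] by auto
  ultimately have "((\<lambda>t. f (x + t *\<^sub>R v) A) has_vector_derivative D v) (at 0)"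
    by (simp add: has_vector_derivative_def)
  then show ?thesis unfolding dir_deriv_def by (simp add: vector_derivative_at)
qed

lemma dir_deriv_cl_deriv:
  assumes "cl_smooth f"
  shows "dir_deriv v f x = cl_deriv v f x"
proof
  fix A
  show "dir_deriv v f x A = cl_deriv v f x A"
    using dir_deriv_eqI[of f A "\<lambda>v. cl_deriv v f x A" x v]
      cl_smooth_has_derivative[OF assms, of A x] by simp
qed

lemma partial_cl_deriv: "cl_smooth f \<Longrightarrow> partial i f x = cl_deriv (axis i 1) f x"
  unfolding partial_def by (rule dir_deriv_cl_deriv)

lemma cl_smooth_lincomb:
  assumes "finite J" "\<And>j. j \<in> J \<Longrightarrow> cl_smooth (F j)"
  shows "cl_smooth (\<lambda>y A. \<Sum>j\<in>J. c j * F j y A)"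
  using assms unfolding cl_smooth_def by (auto intro!: derivative_intros)

lemma cl_deriv_lincomb:
  assumes "finite J" "\<And>j. j \<in> J \<Longrightarrow> cl_smooth (F j)"
  shows "cl_deriv v (\<lambda>y A. \<Sum>j\<in>J. c j * F j y A) x A = (\<Sum>j\<in>J. c j * cl_deriv v (F j) x A)"
  using assms cl_smooth_has_derivative
  by (intro cl_deriv_eqI) (auto intro!: derivative_eq_intros)

lemma diff_quot_lincomb:
  assumes "finite J" "\<And>j. j \<in> J \<Longrightarrow> cl_smooth (F j)"
  shows "diff_quot a (\<lambda>y A. \<Sum>j\<in>J. c j * F j y A) x A = (\<Sum>j\<in>J. c j * diff_quot a (F j) x A)"
proof (cases "a \<bullet> x = 0")
  case True
  have "dir_deriv a (F j) x A = cl_deriv a (F j) x A" if "j \<in> J" for j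
    using dir_deriv_cl_deriv assms(2)[OF that] by metis
  then show ?thesis
    using True dir_deriv_cl_deriv[OF cl_smooth_lincomb[OF assms]] unfolding diff_quot_def
    by (simp add: cl_deriv_lincomb[OF assms] sum_distrib_left mult.left_commute)
next
  case False
  then show ?thesis unfolding diff_quot_def
    by (simp add: sum_divide_distrib[symmetric] sum_subtractf[symmetric] right_diff_distrib)
qed

lemma dunkl_lincomb:
  assumes "finite J" "\<And>j. j \<in> J \<Longrightarrow> cl_smooth (F j)"
  shows "dunkl Rp \<kappa> i (\<lambda>y A. \<Sum>j\<in>J. c j * F j y A) x A = (\<Sum>j\<in>J. c j * dunkl Rp \<kappa> i (F j) x A)"
proof -
  have "partial i (\<lambda>y A. \<Sum>j\<in>J. c j * F j y A) x A = (\<Sum>j\<in>J. c j * partial i (F j) x A)"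
    using assms by (simp add: partial_cl_deriv cl_smooth_lincomb cl_deriv_lincomb)
  moreover have "diff_quot a (\<lambda>y A. \<Sum>j\<in>J. c j * F j y A) x A
      = (\<Sum>j\<in>J. c j * diff_quot a (F j) x A)" for a
    using diff_quot_lincomb[of J F, OF assms] by blast
  ultimately show ?thesis unfolding dunkl_def
    by (simp add: sum.distrib sum_distrib_left distrib_left mult.left_commute sum.swap[of _ J])
qed

lemma dunkl_dirac_split:
  assumes "finite Rp"
  shows "dunkl_dirac Rp \<kappa> g x A = (\<Sum>i\<in>UNIV. gen_mult i (partial i g x) A)
     + (\<Sum>a\<in>Rp. complex_of_real (\<kappa> a) * vec_mult a (diff_quot a g x) A)"
proof -
  have "dunkl_dirac Rp \<kappa> g x A = (\<Sum>i\<in>UNIV. gen_mult i (partial i g x) A + (\<Sum>a\<in>Rp.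
      complex_of_real (\<kappa> a) * (complex_of_real (a $ i) * gen_mult i (diff_quot a g x) A)))"
    unfolding dunkl_dirac_def cl_mult_gen dunkl_def by (simp add: mult.assoc)
  then show ?thesis unfolding vec_mult_def
    by (simp add: sum.distrib sum_distrib_left sum.swap[of _ UNIV])
qed

lemma dunkl_dirac_lincomb:
  assumes "finite J" "\<And>j. j \<in> J \<Longrightarrow> cl_smooth (F j)"
  shows "dunkl_dirac Rp \<kappa> (\<lambda>y A. \<Sum>j\<in>J. c j * F j y A) x A
       = (\<Sum>j\<in>J. c j * dunkl_dirac Rp \<kappa> (F j) x A)"
proof -
  have "dunkl Rp \<kappa> i (\<lambda>y A. \<Sum>j\<in>J. c j * F j y A) x = (\<lambda>B. \<Sum>j\<in>J. c j * dunkl Rp \<kappa> i (F j) x B)"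
    for i using dunkl_lincomb[of J F, OF assms] by blast
  then show ?thesis unfolding dunkl_dirac_def cl_mult_gen
    by (simp add: sum_distrib_left sum.swap[of _ J])
qed

section \<open>Commuting the Dunkl-Dirac operator with x and with powers of |x|^2\<close>

definition mult_x :: "((real, 'n::{finite,linorder}) vec \<Rightarrow> 'n cl) \<Rightarrow> (real, 'n) vec \<Rightarrow> 'n cl" where
  "mult_x g = (\<lambda>y. vec_mult y (g y))"

definition mult_norm :: "nat \<Rightarrow> ((real, 'n::{finite,linorder}) vec \<Rightarrow> 'n cl) \<Rightarrow> (real, 'n) vec \<Rightarrow> 'n cl" where
  "mult_norm m g = (\<lambda>y A. complex_of_real ((y \<bullet> y) ^ m) * g y A)"

lemma mult_x_square: "vec_mult x (mult_x g x) A = - complex_of_real (x \<bullet> x) * g x A"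
  unfolding mult_x_def by (rule vec_mult_square)

lemma mult_x_has_derivative:
  assumes "cl_smooth g"
  shows "((\<lambda>y. mult_x g y A) has_derivative
           (\<lambda>v. vec_mult v (g x) A + vec_mult x (cl_deriv v g x) A)) (at x)"
proof -
  have "((\<lambda>y. \<Sum>k\<in>UNIV. complex_of_real (y $ k) * (gen_sign k A * g y (flip k A)))
    has_derivative (\<lambda>v. \<Sum>k\<in>UNIV. complex_of_real (v $ k) * (gen_sign k A * g x (flip k A))
        + complex_of_real (x $ k) * (gen_sign k A * cl_deriv v g x (flip k A)))) (at x)"
    using cl_smooth_has_derivative[OF assms]
    by (auto intro!: derivative_eq_intros bounded_linear.has_derivative[OF bounded_linear_vec_nth]
        simp: algebra_simps)
  then show ?thesis unfolding mult_x_def vec_mult_def gen_mult_def by (simp add: sum.distrib)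
qed

lemma cl_smooth_mult_x: "cl_smooth g \<Longrightarrow> cl_smooth (mult_x g)"
  unfolding cl_smooth_def[of "mult_x g"] differentiable_def using mult_x_has_derivative by blast

lemma cl_deriv_mult_x:
  "cl_smooth g \<Longrightarrow> cl_deriv v (mult_x g) x A = vec_mult v (g x) A + vec_mult x (cl_deriv v g x) A"
  using cl_deriv_eqI[of "mult_x g" A _ x v] mult_x_has_derivative[of g A x] by simp

lemma partial_mult_x:
  assumes "cl_smooth g"
  shows "partial i (mult_x g) x = (\<lambda>B. gen_mult i (g x) B + vec_mult x (partial i g x) B)"
  unfolding partial_cl_deriv[OF cl_smooth_mult_x[OF assms]] partial_cl_deriv[OF assms]
  by (simp add: cl_deriv_mult_x[OF assms] vec_mult_axis fun_eq_iff)

lemma diff_quot_times_inner: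
  "complex_of_real (a \<bullet> x) * diff_quot a g x B = g x B - g (refl a x) B"
  unfolding diff_quot_def refl_def by auto

text \<open>The difference quotient of x g; the correction term comes from
  sigma_a(x) = x - 2 <a,x>/|a|^2 a.\<close>
lemma diff_quot_mult_x:
  assumes "cl_smooth g" "a \<noteq> 0"
  shows "diff_quot a (mult_x g) x A = vec_mult x (diff_quot a g x) A
           + complex_of_real (2 / (a \<bullet> a)) * vec_mult a (g (refl a x)) A"
proof (cases "a \<bullet> x = 0")
  case True
  then have "refl a x = x" unfolding refl_def by simp
  then show ?thesis using True unfolding diff_quot_def
    using dir_deriv_cl_deriv[OF cl_smooth_mult_x[OF assms(1)]] dir_deriv_cl_deriv[OF assms(1)]
    by (simp add: cl_deriv_mult_x[OF assms(1)] algebra_simps)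
next
  case False
  have "a \<bullet> a \<noteq> 0" using assms(2) by simp
  have refl_mult: "vec_mult (refl a x) w A
      = vec_mult x w A - complex_of_real (2 * (a \<bullet> x) / (a \<bullet> a)) * vec_mult a w A" for w
    unfolding refl_def vec_mult_vec_diff vec_mult_vec_scale ..
  show ?thesis using False \<open>a \<bullet> a \<noteq> 0\<close> unfolding diff_quot_def mult_x_def
    by (simp add: refl_mult field_simps)
qed

lemma dirac_mult_x:
  fixes g :: "(real, 'n::{finite,linorder}) vec \<Rightarrow> 'n cl"
  assumes "cl_smooth g"
  shows "(\<Sum>i\<in>UNIV. gen_mult i (partial i (mult_x g) x) A)
     = - of_nat CARD('n) * g x A - vec_mult x (\<lambda>B. \<Sum>i\<in>UNIV. gen_mult i (partial i g x) B) A
       - 2 * (\<Sum>i\<in>UNIV. complex_of_real (x $ i) * partial i g x A)"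
proof -
  have "(\<Sum>i\<in>UNIV. gen_mult i (partial i (mult_x g) x) A) = (\<Sum>i\<in>UNIV.
      - g x A - vec_mult x (gen_mult i (partial i g x)) A
      - 2 * (complex_of_real (x $ i) * partial i g x A))"
    unfolding partial_mult_x[OF assms] by (simp add: gen_mult_square gen_vec_anticomm algebra_simps)
  then show ?thesis by (simp add: sum_subtractf sum_negf sum_distrib_left)
qed

lemma root_term_mult_x:
  assumes "cl_smooth g" "a \<noteq> 0"
  shows "vec_mult a (diff_quot a (mult_x g) x) A
     = - vec_mult x (vec_mult a (diff_quot a g x)) A - 2 * g x A"
proof -
  define Q where "Q = diff_quot a g x"
  define S where "S = g (refl a x)"
  have "a \<bullet> a \<noteq> 0" using assms(2) by simp
  have "vec_mult a (vec_mult x Q) A = - 2 * (complex_of_real (a \<bullet> x) * Q A) - vec_mult x (vec_mult a Q) A"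
    using vec_mult_anticomm[of a x Q A] by (simp only: eq_diff_eq mult.assoc)
  also have "complex_of_real (a \<bullet> x) * Q A = g x A - S A"
    unfolding Q_def S_def by (rule diff_quot_times_inner)
  finally have "vec_mult a (vec_mult x Q) A = - 2 * (g x A - S A) - vec_mult x (vec_mult a Q) A" .
  moreover have "complex_of_real (2 / (a \<bullet> a)) * vec_mult a (vec_mult a S) A = - 2 * S A"
    using \<open>a \<bullet> a \<noteq> 0\<close> by (simp add: vec_mult_square)
  ultimately show ?thesis
    unfolding diff_quot_mult_x[OF assms] Q_def[symmetric] S_def[symmetric] vec_mult_add vec_mult_scale
    by (simp add: algebra_simps)
qed

lemma dunkl_dirac_mult_x:
  fixes g :: "(real, 'n::{finite,linorder}) vec \<Rightarrow> 'n cl"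
  assumes g: "cl_smooth g" and fin: "finite Rp" and nz: "\<And>a. a \<in> Rp \<Longrightarrow> a \<noteq> 0"
  shows "dunkl_dirac Rp \<kappa> (mult_x g) x A =
     - vec_mult x (dunkl_dirac Rp \<kappa> g x) A
     - complex_of_real (real CARD('n) + 2 * gamma_k Rp \<kappa>) * g x A
     - 2 * (\<Sum>i\<in>UNIV. complex_of_real (x $ i) * partial i g x A)"
proof -
  have roots: "(\<Sum>a\<in>Rp. complex_of_real (\<kappa> a) * vec_mult a (diff_quot a (mult_x g) x) A)
     = - (\<Sum>a\<in>Rp. complex_of_real (\<kappa> a) * vec_mult x (vec_mult a (diff_quot a g x)) A)
       - 2 * complex_of_real (gamma_k Rp \<kappa>) * g x A"
    unfolding gamma_k_def using root_term_mult_x[OF g nz]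
    by (simp add: sum_subtractf sum_negf sum_distrib_left sum_distrib_right right_diff_distrib
        mult.assoc mult.left_commute)
  have split_x: "vec_mult x (dunkl_dirac Rp \<kappa> g x) A
     = vec_mult x (\<lambda>B. \<Sum>i\<in>UNIV. gen_mult i (partial i g x) B) A
       + (\<Sum>a\<in>Rp. complex_of_real (\<kappa> a) * vec_mult x (vec_mult a (diff_quot a g x)) A)"
    unfolding dunkl_dirac_split[OF fin, abs_def] by simp
  have "dunkl_dirac Rp \<kappa> (mult_x g) x A = (\<Sum>i\<in>UNIV. gen_mult i (partial i (mult_x g) x) A)
     + (\<Sum>a\<in>Rp. complex_of_real (\<kappa> a) * vec_mult a (diff_quot a (mult_x g) x) A)"
    by (rule dunkl_dirac_split[OF fin])
  also have "\<dots> = (- of_nat CARD('n) * g x A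
       - vec_mult x (\<lambda>B. \<Sum>i\<in>UNIV. gen_mult i (partial i g x) B) A
       - 2 * (\<Sum>i\<in>UNIV. complex_of_real (x $ i) * partial i g x A))
     + (- (\<Sum>a\<in>Rp. complex_of_real (\<kappa> a) * vec_mult x (vec_mult a (diff_quot a g x)) A)
       - 2 * complex_of_real (gamma_k Rp \<kappa>) * g x A)"
    unfolding dirac_mult_x[OF g] roots ..
  also have "\<dots> = - vec_mult x (dunkl_dirac Rp \<kappa> g x) A
     - complex_of_real (real CARD('n) + 2 * gamma_k Rp \<kappa>) * g x A
     - 2 * (\<Sum>i\<in>UNIV. complex_of_real (x $ i) * partial i g x A)"
    unfolding split_x by (simp add: algebra_simps)
  finally show ?thesis .
qed

text \<open>Product rule for |x|^(2m) g.  Since |x|^2 is reflection invariant, |x|^(2m)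
  commutes with the difference quotients, and D_h(|x|^(2m) g) = |x|^(2m) D_h g +
  2m |x|^(2m-2) x g.\<close>
lemma mult_norm_has_derivative:
  assumes "cl_smooth g"
  shows "((\<lambda>y. mult_norm m g y A) has_derivative
     (\<lambda>v. complex_of_real (real m * (x \<bullet> x) ^ (m - 1) * (2 * (x \<bullet> v))) * g x A
        + complex_of_real ((x \<bullet> x) ^ m) * cl_deriv v g x A)) (at x)"
  unfolding mult_norm_def using cl_smooth_has_derivative[OF assms]
  by (auto intro!: derivative_eq_intros simp: inner_commute algebra_simps)

lemma cl_smooth_mult_norm: "cl_smooth g \<Longrightarrow> cl_smooth (mult_norm m g)"
  unfolding cl_smooth_def[of "mult_norm m g"] differentiable_def
  using mult_norm_has_derivative by blast

lemma cl_deriv_mult_norm: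
  "cl_smooth g \<Longrightarrow> cl_deriv v (mult_norm m g) x A =
     complex_of_real (real m * (x \<bullet> x) ^ (m - 1) * (2 * (x \<bullet> v))) * g x A
     + complex_of_real ((x \<bullet> x) ^ m) * cl_deriv v g x A"
  using cl_deriv_eqI[of "mult_norm m g" A _ x v] mult_norm_has_derivative[of g m A x] by simp

lemma refl_inner_self:
  assumes "a \<noteq> 0"
  shows "refl a x \<bullet> refl a x = x \<bullet> x"
proof -
  have "a \<bullet> a \<noteq> 0" using assms by simp
  then show ?thesis unfolding refl_def
    by (simp add: inner_diff_left inner_diff_right inner_commute power2_eq_square field_simps)
qed

lemma diff_quot_mult_norm:
  assumes "cl_smooth g" "a \<noteq> 0"
  shows "diff_quot a (mult_norm m g) x A = complex_of_real ((x \<bullet> x) ^ m) * diff_quot a g x A"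
proof (cases "a \<bullet> x = 0")
  case True
  then show ?thesis unfolding diff_quot_def
    using dir_deriv_cl_deriv[OF cl_smooth_mult_norm[OF assms(1)]] dir_deriv_cl_deriv[OF assms(1)]
    by (simp add: cl_deriv_mult_norm[OF assms(1)] inner_commute)
next
  case False
  then show ?thesis unfolding diff_quot_def mult_norm_def
    by (simp add: refl_inner_self[OF assms(2)] diff_divide_distrib right_diff_distrib)
qed

lemma partial_mult_norm:
  assumes "cl_smooth g"
  shows "partial i (mult_norm m g) x = (\<lambda>B.
     complex_of_real (2 * real m * (x \<bullet> x) ^ (m - 1)) * (complex_of_real (x $ i) * g x B)
     + complex_of_real ((x \<bullet> x) ^ m) * partial i g x B)"
  unfolding partial_cl_deriv[OF cl_smooth_mult_norm[OF assms]] partial_cl_deriv[OF assms]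
  by (simp add: cl_deriv_mult_norm[OF assms] inner_axis fun_eq_iff)

lemma dunkl_dirac_mult_norm:
  assumes g: "cl_smooth g" and fin: "finite Rp" and nz: "\<And>a. a \<in> Rp \<Longrightarrow> a \<noteq> 0"
  shows "dunkl_dirac Rp \<kappa> (mult_norm m g) x A =
     complex_of_real ((x \<bullet> x) ^ m) * dunkl_dirac Rp \<kappa> g x A
     + complex_of_real (2 * real m * (x \<bullet> x) ^ (m - 1)) * vec_mult x (g x) A"
proof -
  have "dunkl_dirac Rp \<kappa> (mult_norm m g) x A = (\<Sum>i\<in>UNIV.
        complex_of_real (2 * real m * (x \<bullet> x) ^ (m - 1)) * (complex_of_real (x $ i) * gen_mult i (g x) A)
        + complex_of_real ((x \<bullet> x) ^ m) * gen_mult i (partial i g x) A)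
     + (\<Sum>a\<in>Rp. complex_of_real (\<kappa> a) * (complex_of_real ((x \<bullet> x) ^ m) * vec_mult a (diff_quot a g x) A))"
  proof -
    have "diff_quot a (mult_norm m g) x = (\<lambda>B. complex_of_real ((x \<bullet> x) ^ m) * diff_quot a g x B)"
      if "a \<in> Rp" for a
      using diff_quot_mult_norm[OF g nz[OF that]] by blast
    then show ?thesis unfolding dunkl_dirac_split[OF fin] partial_mult_norm[OF g]
      by (simp cong: sum.cong)
  qed
  also have "\<dots> = complex_of_real ((x \<bullet> x) ^ m) * ((\<Sum>i\<in>UNIV. gen_mult i (partial i g x) A)
     + (\<Sum>a\<in>Rp. complex_of_real (\<kappa> a) * vec_mult a (diff_quot a g x) A))
     + complex_of_real (2 * real m * (x \<bullet> x) ^ (m - 1))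
       * (\<Sum>i\<in>UNIV. complex_of_real (x $ i) * gen_mult i (g x) A)"
    by (simp add: sum.distrib sum_distrib_left distrib_left mult.left_commute)
  finally show ?thesis unfolding dunkl_dirac_split[OF fin] vec_mult_def .
qed

section \<open>Homogeneous polynomials\<close>

lemma homog_poly_smooth:
  assumes "homog_poly n P"
  shows "cl_smooth P"
proof -
  obtain c where c: "\<And>x. P x = (\<lambda>A. \<Sum>\<alpha>\<in>{\<alpha>. (\<Sum>i\<in>UNIV. \<alpha> i) = n}.
                 c \<alpha> A * complex_of_real (\<Prod>i\<in>UNIV. (x $ i) ^ (\<alpha> i)))"
    using assms unfolding homog_poly_def by blast
  have "\<exists>D. ((\<lambda>y. P y A) has_derivative D) (at x)" for A x
    unfolding c
    by (rule exI, rule has_derivative_sum, rule has_derivative_mult_right, rule has_derivative_of_real,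
        rule has_derivative_prod, rule has_derivative_power,
        rule bounded_linear.has_derivative[OF bounded_linear_vec_nth has_derivative_ident])
  then show ?thesis unfolding cl_smooth_def differentiable_def by blast
qed

lemma homog_poly_scale:
  assumes "homog_poly n P"
  shows "P (t *\<^sub>R x) A = complex_of_real (t ^ n) * P x A"
proof -
  obtain c where c: "\<And>x. P x = (\<lambda>A. \<Sum>\<alpha>\<in>{\<alpha>. (\<Sum>i\<in>UNIV. \<alpha> i) = n}.
                 c \<alpha> A * complex_of_real (\<Prod>i\<in>UNIV. (x $ i) ^ (\<alpha> i)))"
    using assms unfolding homog_poly_def by blast
  have "(\<Prod>i\<in>UNIV. (t * x $ i) ^ (\<alpha> i)) = t ^ n * (\<Prod>i\<in>UNIV. (x $ i) ^ (\<alpha> i))"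
    if "(\<Sum>i\<in>UNIV. \<alpha> i) = n" for \<alpha> :: "'a \<Rightarrow> nat"
    using that by (simp add: power_mult_distrib prod.distrib power_sum[symmetric])
  then show ?thesis unfolding c sum_distrib_left
    by (intro sum.cong refl) (simp del: of_real_prod of_real_power add: mult.left_commute)
qed

lemma homog_poly_euler:
  assumes "homog_poly n P"
  shows "(\<Sum>i\<in>UNIV. complex_of_real (x $ i) * partial i P x A) = of_nat n * P x A"
proof -
  have smooth: "cl_smooth P" by (rule homog_poly_smooth[OF assms])
  define D where "D = frechet_derivative (\<lambda>y. P y A) (at x)"
  have D: "((\<lambda>y. P y A) has_derivative D) (at x)"
    unfolding D_def using smooth frechet_derivative_works unfolding cl_smooth_def by blast
  have "(\<lambda>t. P (x + t *\<^sub>R x) A) = (\<lambda>t. complex_of_real ((1 + t) ^ n) * P x A)"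
    using homog_poly_scale[OF assms, of "1 + _" x A] by (simp add: algebra_simps)
  moreover have "((\<lambda>t. complex_of_real ((1 + t) ^ n) * P x A)
      has_vector_derivative of_nat n * P x A) (at 0)"
    unfolding has_vector_derivative_def
    by (auto intro!: derivative_eq_intros simp: fun_eq_iff scaleR_conv_of_real)
  ultimately have "((\<lambda>t. P (x + t *\<^sub>R x) A) has_vector_derivative of_nat n * P x A) (at 0)"
    by simp
  then have "dir_deriv x P x A = of_nat n * P x A"
    unfolding dir_deriv_def by (simp add: vector_derivative_at)
  moreover have "dir_deriv x P x A = D x"
    by (rule dir_deriv_eqI[of P A D x, OF D])
  moreover have "D x = (\<Sum>i\<in>UNIV. complex_of_real (x $ i) * D (axis i 1))"
  proof -
    have "D x = D (\<Sum>i\<in>UNIV. x $ i *\<^sub>R axis i 1)"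
      using basis_expansion[of x] by (simp add: scalar_mult_eq_scaleR)
    also have "\<dots> = (\<Sum>i\<in>UNIV. x $ i *\<^sub>R D (axis i 1))"
      using has_derivative_linear[OF D] by (simp add: linear_sum linear_scale)
    finally show ?thesis by (simp add: scaleR_conv_of_real)
  qed
  moreover have "partial i P x A = D (axis i 1)" for i
    unfolding partial_def by (rule dir_deriv_eqI[of P A D x, OF D])
  ultimately show ?thesis by simp
qed

section \<open>The coefficient recursion\<close>

text \<open>Coefficients of D_h and of x in the ladder basis (see the last section):
  D_h F_j = down_coeff nu j * F_(j-1) and x F_j = up_sign j * F_(j+1).\<close>
definition down_coeff :: "real \<Rightarrow> nat \<Rightarrow> real" where
  "down_coeff \<nu> j = (if even j then real j else - (\<nu> + real j - 1))"

definition up_sign :: "nat \<Rightarrow> real" where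
  "up_sign j = (if even j then 1 else -1)"

text \<open>The induced maps on coefficient sequences: sum c_j F_j is sent by D_h to
  sum (lower nu c)_j F_j and by x to sum (raise c)_j F_j.\<close>
definition lower :: "real \<Rightarrow> (nat \<Rightarrow> real) \<Rightarrow> nat \<Rightarrow> real" where
  "lower \<nu> c j = down_coeff \<nu> (Suc j) * c (Suc j)"

definition raise :: "(nat \<Rightarrow> real) \<Rightarrow> nat \<Rightarrow> real" where
  "raise c j = (if j = 0 then 0 else up_sign (j - 1) * c (j - 1))"

text \<open>Coefficients of H_s = (D_h - 2x)^s P in the ladder basis.\<close>
fun H_coeff :: "real \<Rightarrow> nat \<Rightarrow> nat \<Rightarrow> real" where
  "H_coeff \<nu> 0 j = (if j = 0 then 1 else 0)"
| "H_coeff \<nu> (Suc s) j = lower \<nu> (H_coeff \<nu> s) j - 2 * raise (H_coeff \<nu> s) j"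

text \<open>The constant C(s) of the theorem, written with nu = mu + 2n, and the constant in
  the degree relation (N - s) c_s = K(s) c_(s-2).\<close>
definition H_const :: "real \<Rightarrow> nat \<Rightarrow> real" where
  "H_const \<nu> s = (if even s then 2 * real s else 2 * (real s - 1 + \<nu>))"

definition K_const :: "real \<Rightarrow> nat \<Rightarrow> real" where
  "K_const \<nu> s = - (H_const \<nu> s * H_const \<nu> (s - 1)) / 2"

text \<open>The shadow of D_h x + x D_h = -(mu + 2E): lower raise + raise lower = -(nu + 2N).\<close>
lemma lower_raise_anticomm:
  "lower \<nu> (raise c) j + raise (lower \<nu> c) j = - (\<nu> + 2 * real j) * c j"
proof (cases j)
  case 0
  then show ?thesis by (simp add: lower_def raise_def down_coeff_def up_sign_def)
next
  case (Suc k)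
  then show ?thesis
    by (cases "even k") (auto simp: lower_def raise_def down_coeff_def up_sign_def algebra_simps)
qed

lemma lower_shift: "(real j - t) * lower \<nu> c j = lower \<nu> (\<lambda>k. (real k - 1 - t) * c k) j"
  unfolding lower_def by (simp add: algebra_simps)

lemma raise_shift: "(real j - t) * raise c j = raise (\<lambda>k. (real k + 1 - t) * c k) j"
  unfolding raise_def by (cases j) (simp_all add: algebra_simps)

lemma lower_lincomb: "lower \<nu> (\<lambda>k. a * c k + b * d k) j = a * lower \<nu> c j + b * lower \<nu> d j"
  unfolding lower_def by (simp add: algebra_simps)

lemma raise_lincomb: "raise (\<lambda>k. a * c k + b * d k) j = a * raise c j + b * raise d j"
  unfolding raise_def by (simp add: algebra_simps)

lemma lower_scale: "lower \<nu> (\<lambda>k. a * c k) j = a * lower \<nu> c j"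
  unfolding lower_def by (simp add: algebra_simps)

lemma raise_scale: "raise (\<lambda>k. a * c k) j = a * raise c j"
  unfolding raise_def by (simp add: algebra_simps)

lemma H_const_Suc: "H_const \<nu> (Suc s) = 2 * \<nu> + 4 * real s - H_const \<nu> s"
  by (cases "even s") (auto simp: H_const_def algebra_simps)

lemma K_const_Suc: "K_const \<nu> (Suc s) = K_const \<nu> s - 2 * H_const \<nu> s"
  by (cases s) (auto simp: K_const_def H_const_def algebra_simps)

lemma degree_step:
  assumes A: "\<And>j. lower \<nu> (H_coeff \<nu> s) j = H_const \<nu> s * H_coeff \<nu> (s - 1) j"
    and B: "\<And>j. (real j - real s) * H_coeff \<nu> s j = K_const \<nu> s * H_coeff \<nu> (s - 2) j"
  shows "(real j - real (Suc s)) * H_coeff \<nu> (Suc s) j = K_const \<nu> (Suc s) * H_coeff \<nu> (Suc s - 2) j"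
proof -
  define u where "u = H_coeff \<nu> s"
  have B_lower: "(\<lambda>k. (real k - 1 - real (Suc s)) * u k)
      = (\<lambda>k. K_const \<nu> s * H_coeff \<nu> (s - 2) k + (-2) * u k)"
    using B unfolding u_def by (simp add: fun_eq_iff algebra_simps)
  have B_raise: "(\<lambda>k. (real k + 1 - real (Suc s)) * u k)
      = (\<lambda>k. K_const \<nu> s * H_coeff \<nu> (s - 2) k + 0 * u k)"
    using B unfolding u_def by (simp add: fun_eq_iff algebra_simps)
  have "(real j - real (Suc s)) * H_coeff \<nu> (Suc s) j
      = (real j - real (Suc s)) * lower \<nu> u j - 2 * ((real j - real (Suc s)) * raise u j)"
    unfolding u_def by (simp add: algebra_simps)
  also have "\<dots> = K_const \<nu> s * (lower \<nu> (H_coeff \<nu> (s - 2)) j - 2 * raise (H_coeff \<nu> (s - 2)) j)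
      - 2 * lower \<nu> u j"
    unfolding lower_shift raise_shift B_lower B_raise lower_lincomb raise_lincomb
    by (simp add: algebra_simps)
  also have "\<dots> = (K_const \<nu> s - 2 * H_const \<nu> s) * H_coeff \<nu> (s - 1) j"
  proof (cases "s < 2")
    case True
    then have "K_const \<nu> s = 0" by (cases s) (auto simp: K_const_def H_const_def)
    then show ?thesis unfolding u_def A by simp
  next
    case False
    then have "s - 1 = Suc (s - 2)" by simp
    then show ?thesis unfolding u_def A by (simp add: algebra_simps)
  qed
  finally show ?thesis by (simp add: K_const_Suc)
qed

text \<open>Induction step for the lowering relation lower c_s = C(s) c_(s-1); it needs the
  degree relation at s to eliminate the term with N.\<close>
lemma lowering_step:
  assumes s: "1 \<le> s"
    and A: "\<And>j. lower \<nu> (H_coeff \<nu> s) j = H_const \<nu> s * H_coeff \<nu> (s - 1) j"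
    and A_prev: "\<And>j. lower \<nu> (H_coeff \<nu> (s - 1)) j = H_const \<nu> (s - 1) * H_coeff \<nu> (s - 2) j"
    and B: "\<And>j. (real j - real s) * H_coeff \<nu> s j = K_const \<nu> s * H_coeff \<nu> (s - 2) j"
  shows "lower \<nu> (H_coeff \<nu> (Suc s)) j = H_const \<nu> (Suc s) * H_coeff \<nu> s j"
proof -
  define u where "u = H_coeff \<nu> s"
  define v where "v = H_coeff \<nu> (s - 1)"
  have lower_u: "lower \<nu> u = (\<lambda>k. H_const \<nu> s * v k)"
    using A unfolding u_def v_def by (simp add: fun_eq_iff)
  have u_rec: "u j = lower \<nu> v j - 2 * raise v j"
    using s unfolding u_def v_def by (cases s) auto
  have lower_lower: "lower \<nu> (lower \<nu> u) j = H_const \<nu> s * lower \<nu> v j"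
    unfolding lower_u lower_scale ..
  have lower_raise: "lower \<nu> (raise u) j = - (\<nu> + 2 * real j) * u j - H_const \<nu> s * raise v j"
    using lower_raise_anticomm[of \<nu> u j] unfolding lower_u raise_scale by (simp add: algebra_simps)
  have "lower \<nu> (H_coeff \<nu> (Suc s)) j = lower \<nu> (lower \<nu> u) j - 2 * lower \<nu> (raise u) j"
    unfolding u_def lower_def[of \<nu> "H_coeff \<nu> (Suc s)"] lower_def[of \<nu> "raise _"]
      lower_def[of \<nu> "lower \<nu> _"]
    by (simp add: algebra_simps)
  also have "\<dots> = 2 * H_const \<nu> s * lower \<nu> v j + (2 * \<nu> + 4 * real j - H_const \<nu> s) * u j"
    unfolding lower_lower lower_raise u_rec by (simp add: algebra_simps)
  also have "\<dots> = (2 * \<nu> + 4 * real s - H_const \<nu> s) * u j"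
    using A_prev[of j] B[of j] unfolding u_def v_def K_const_def by (simp add: algebra_simps)
  finally show ?thesis unfolding u_def H_const_Suc .
qed

lemma H_coeff_relations:
  "lower \<nu> (H_coeff \<nu> s) j = H_const \<nu> s * H_coeff \<nu> (s - 1) j \<and>
   (real j - real s) * H_coeff \<nu> s j = K_const \<nu> s * H_coeff \<nu> (s - 2) j"
proof (induction s arbitrary: j rule: less_induct)
  case (less s)
  show ?case
  proof (cases s)
    case 0
    then show ?thesis by (simp add: lower_def K_const_def H_const_def)
  next
    case (Suc t)
    have A: "lower \<nu> (H_coeff \<nu> t) j = H_const \<nu> t * H_coeff \<nu> (t - 1) j"
      and B: "(real j - real t) * H_coeff \<nu> t j = K_const \<nu> t * H_coeff \<nu> (t - 2) j" for j
      using less Suc by auto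
    have "lower \<nu> (H_coeff \<nu> s) j = H_const \<nu> s * H_coeff \<nu> (s - 1) j"
    proof (cases t)
      case 0
      then show ?thesis using Suc
        by (simp add: lower_def raise_def down_coeff_def up_sign_def H_const_def)
    next
      case (Suc r)
      then have "lower \<nu> (H_coeff \<nu> (t - 1)) j = H_const \<nu> (t - 1) * H_coeff \<nu> (t - 2) j" for j
        using less \<open>s = Suc t\<close> by simp
      then show ?thesis using lowering_step[of t \<nu>] A B Suc \<open>s = Suc t\<close> by simp
    qed
    moreover have "(real j - real s) * H_coeff \<nu> s j = K_const \<nu> s * H_coeff \<nu> (s - 2) j"
      using degree_step[of \<nu> t] A B Suc by simp
    ultimately show ?thesis ..
  qed
qed

lemma lower_H_coeff: "lower \<nu> (H_coeff \<nu> s) j = H_const \<nu> s * H_coeff \<nu> (s - 1) j"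
  using H_coeff_relations by blast

section \<open>The ladder of functions |x|^(2m) P and |x|^(2m) x P\<close>

definition ladder :: "((real, 'n::{finite,linorder}) vec \<Rightarrow> 'n cl) \<Rightarrow> nat \<Rightarrow> (real, 'n) vec \<Rightarrow> 'n cl" where
  "ladder P j = (if even j then mult_norm (j div 2) P else mult_norm (j div 2) (mult_x P))"

lemma cl_smooth_ladder: "cl_smooth P \<Longrightarrow> cl_smooth (ladder P j)"
  unfolding ladder_def by (auto intro: cl_smooth_mult_norm cl_smooth_mult_x)

lemma mult_x_ladder: "vec_mult x (ladder P j x) A = complex_of_real (up_sign j) * ladder P (Suc j) x A"
proof (cases "even j")
  case True
  then obtain m where j: "j = 2 * m" by blast
  show ?thesis unfolding ladder_def j by (simp add: mult_norm_def mult_x_def up_sign_def)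
next
  case False
  then obtain m where j: "j = 2 * m + 1" using oddE by blast
  have "vec_mult x (ladder P j x) A = complex_of_real ((x \<bullet> x) ^ m) * vec_mult x (mult_x P x) A"
    unfolding ladder_def j mult_norm_def by simp
  also have "\<dots> = complex_of_real (up_sign j) * ladder P (Suc j) x A"
    unfolding mult_x_square unfolding ladder_def j mult_norm_def up_sign_def
    by (simp add: algebra_simps)
  finally show ?thesis .
qed

context
  fixes Rp :: "((real, 'n::{finite,linorder}) vec) set" and \<kappa> :: "(real, 'n) vec \<Rightarrow> real"
    and P :: "(real, 'n) vec \<Rightarrow> 'n cl" and n :: nat
  assumes fin: "finite Rp" and nz: "\<And>a. a \<in> Rp \<Longrightarrow> a \<noteq> 0"
    and hp: "homog_poly n P" and mono: "\<And>x. dunkl_dirac Rp \<kappa> P x = (\<lambda>_. 0)"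
begin

definition ladder_nu :: real where
  "ladder_nu = real CARD('n) + 2 * gamma_k Rp \<kappa> + 2 * real n"

lemma smooth_P: "cl_smooth P"
  by (rule homog_poly_smooth[OF hp])

text \<open>D_h (x P) = - (mu + 2n) P, by the commutation rule, monogenicity and Euler's identity.\<close>
lemma dunkl_dirac_mult_x_P: "dunkl_dirac Rp \<kappa> (mult_x P) x A = - complex_of_real ladder_nu * P x A"
proof -
  have "dunkl_dirac Rp \<kappa> (mult_x P) x A = - vec_mult x (\<lambda>_. 0) A
     - complex_of_real (real CARD('n) + 2 * gamma_k Rp \<kappa>) * P x A - 2 * (of_nat n * P x A)"
    using dunkl_dirac_mult_x[OF smooth_P fin nz, of \<kappa> x A] unfolding mono homog_poly_euler[OF hp] .
  then show ?thesis unfolding ladder_nu_def by (simp add: algebra_simps)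
qed

lemma dunkl_dirac_ladder:
  "dunkl_dirac Rp \<kappa> (ladder P j) x A = complex_of_real (down_coeff ladder_nu j) * ladder P (j - 1) x A"
proof (cases "even j")
  case True
  then obtain m where j: "j = 2 * m" by blast
  have "dunkl_dirac Rp \<kappa> (ladder P j) x A
      = complex_of_real (2 * real m * (x \<bullet> x) ^ (m - 1)) * vec_mult x (P x) A"
    unfolding ladder_def j using dunkl_dirac_mult_norm[OF smooth_P fin nz, of \<kappa> m x A]
    by (simp add: mono)
  also have "\<dots> = complex_of_real (down_coeff ladder_nu j) * ladder P (j - 1) x A"
  proof (cases m)
    case 0
    then show ?thesis by (simp add: j down_coeff_def)
  next
    case (Suc k)
    then have "odd (2 * m - 1)" "(2 * m - 1) div 2 = k" by auto
    then show ?thesis unfolding ladder_def j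
      by (simp add: down_coeff_def mult_norm_def mult_x_def Suc)
  qed
  finally show ?thesis .
next
  case False
  then obtain m where j: "j = 2 * m + 1" using oddE by blast
  have "dunkl_dirac Rp \<kappa> (ladder P j) x A
      = complex_of_real ((x \<bullet> x) ^ m) * (- complex_of_real ladder_nu * P x A)
        + complex_of_real (2 * real m * (x \<bullet> x) ^ (m - 1)) * (- complex_of_real (x \<bullet> x) * P x A)"
    unfolding ladder_def j
    using dunkl_dirac_mult_norm[OF cl_smooth_mult_x[OF smooth_P] fin nz, of \<kappa> m x A]
    by (simp add: dunkl_dirac_mult_x_P mult_x_square)
  also have "\<dots> = complex_of_real (down_coeff ladder_nu j) * ladder P (j - 1) x A"
    by (cases m) (simp_all add: j down_coeff_def ladder_def mult_norm_def algebra_simps)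
  finally show ?thesis .
qed

definition ladder_comb :: "(nat \<Rightarrow> real) \<Rightarrow> nat \<Rightarrow> (real, 'n) vec \<Rightarrow> 'n cl" where
  "ladder_comb c M = (\<lambda>y A. \<Sum>j<M. complex_of_real (c j) * ladder P j y A)"

lemma dunkl_dirac_ladder_comb:
  "dunkl_dirac Rp \<kappa> (ladder_comb c (Suc M)) x A = ladder_comb (lower ladder_nu c) M x A"
proof -
  have "dunkl_dirac Rp \<kappa> (ladder_comb c (Suc M)) x A
      = (\<Sum>j<Suc M. complex_of_real (c j * down_coeff ladder_nu j) * ladder P (j - 1) x A)"
    unfolding ladder_comb_def
    by (subst dunkl_dirac_lincomb) (auto simp: cl_smooth_ladder smooth_P dunkl_dirac_ladder mult.assoc)
  also have "\<dots> = ladder_comb (lower ladder_nu c) M x A"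
    unfolding sum.lessThan_Suc_shift ladder_comb_def lower_def
    by (simp add: down_coeff_def mult.commute)
  finally show ?thesis .
qed

lemma mult_x_ladder_comb:
  "vec_mult x (ladder_comb c M x) A = ladder_comb (raise c) (Suc M) x A"
proof -
  have "vec_mult x (ladder_comb c M x) A
      = (\<Sum>j<M. complex_of_real (c j * up_sign j) * ladder P (Suc j) x A)"
    unfolding ladder_comb_def by (simp add: mult_x_ladder mult.assoc)
  also have "\<dots> = ladder_comb (raise c) (Suc M) x A"
    unfolding sum.lessThan_Suc_shift ladder_comb_def raise_def by (simp add: mult.commute)
  finally show ?thesis .
qed

lemma H_fun_ladder_comb:
  "s < M \<Longrightarrow> H_fun Rp \<kappa> s P = ladder_comb (H_coeff ladder_nu s) M"
proof (induction s arbitrary: M)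
  case 0
  then obtain M' where "M = Suc M'" by (cases M) auto
  then show ?case
    unfolding H_fun_def ladder_comb_def
    by (simp add: sum.lessThan_Suc_shift ladder_def mult_norm_def fun_eq_iff del: sum.lessThan_Suc)
next
  case (Suc s)
  then obtain M' where M: "M = Suc M'" and "s < M'" by (cases M) auto
  have "H_fun Rp \<kappa> (Suc s) P = D_plus Rp \<kappa> (H_fun Rp \<kappa> s P)"
    unfolding H_fun_def by simp
  also have "\<dots> = ladder_comb (H_coeff ladder_nu (Suc s)) M"
  proof (intro ext)
    fix y A
    have "dunkl_dirac Rp \<kappa> (H_fun Rp \<kappa> s P) y A = ladder_comb (lower ladder_nu (H_coeff ladder_nu s)) M y A"
    proof -
      have "H_fun Rp \<kappa> s P = ladder_comb (H_coeff ladder_nu s) (Suc M)"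
        using Suc.IH Suc.prems by simp
      then show ?thesis by (simp add: dunkl_dirac_ladder_comb)
    qed
    moreover have "cl_mult (cl_vec y) (H_fun Rp \<kappa> s P y) A
        = ladder_comb (raise (H_coeff ladder_nu s)) M y A"
      unfolding cl_mult_vec Suc.IH[OF \<open>s < M'\<close>] M mult_x_ladder_comb ..
    ultimately show "D_plus Rp \<kappa> (H_fun Rp \<kappa> s P) y A = ladder_comb (H_coeff ladder_nu (Suc s)) M y A"
      unfolding D_plus_def ladder_comb_def
      by (simp add: sum_subtractf sum_distrib_left algebra_simps)
  qed
  finally show ?case .
qed

lemma dunkl_dirac_H_fun:
  assumes "1 \<le> s"
  shows "dunkl_dirac Rp \<kappa> (H_fun Rp \<kappa> s P) x A
       = complex_of_real (H_const ladder_nu s) * H_fun Rp \<kappa> (s - 1) P x A"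
proof -
  have "dunkl_dirac Rp \<kappa> (H_fun Rp \<kappa> s P) x A = ladder_comb (lower ladder_nu (H_coeff ladder_nu s)) (Suc s) x A"
    by (simp add: H_fun_ladder_comb[of s "Suc (Suc s)"] dunkl_dirac_ladder_comb)
  also have "\<dots> = complex_of_real (H_const ladder_nu s) * ladder_comb (H_coeff ladder_nu (s - 1)) (Suc s) x A"
    unfolding ladder_comb_def lower_H_coeff
    by (simp add: sum_distrib_left mult.assoc del: sum.lessThan_Suc)
  also have "\<dots> = complex_of_real (H_const ladder_nu s) * H_fun Rp \<kappa> (s - 1) P x A"
    using assms H_fun_ladder_comb[of "s - 1" "Suc s"] by simp
  finally show ?thesis .
qed

end

theorem mainTheorem7:
  fixes R Rp :: "((real, 'n::{finite,linorder}) vec) set"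
    and \<kappa> :: "(real, 'n) vec \<Rightarrow> real"
    and P :: "(real, 'n) vec \<Rightarrow> 'n cl"
    and n s :: nat
  assumes "CARD('n) \<ge> 2"
    and "root_system R"
    and "positive_subsystem R Rp"
    and "multiplicity R \<kappa>"
    and "gamma_k Rp \<kappa> > 0"
    and "monogenic Rp \<kappa> n P"
    and "s \<ge> 1"
  shows "\<forall>x. dunkl_dirac Rp \<kappa> (H_fun Rp \<kappa> s P) x =
           (\<lambda>A. complex_of_real
                   (if even s then 2 * real s
                    else 2 * (real s + (2 * gamma_k Rp \<kappa> + real CARD('n)) + 2 * real n - 1))
                 * H_fun Rp \<kappa> (s - 1) P x A)"
proof
  fix x
  have fin: "finite Rp"
  proof (rule ccontr)
    assume "infinite Rp"
    then have "gamma_k Rp \<kappa> = 0" by (simp add: gamma_k_def)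
    then show False using assms(5) by simp
  qed
  obtain \<beta> where "Rp = {\<alpha>\<in>R. \<alpha> \<bullet> \<beta> > 0}"
    using assms(3) unfolding positive_subsystem_def by blast
  then have nz: "\<And>a. a \<in> Rp \<Longrightarrow> a \<noteq> 0" by auto
  have hp: "homog_poly n P" and mono: "\<And>x. dunkl_dirac Rp \<kappa> P x = (\<lambda>_. 0)"
    using assms(6) unfolding monogenic_def by auto
  have "H_const (ladder_nu Rp \<kappa> n) s = (if even s then 2 * real s
      else 2 * (real s + (2 * gamma_k Rp \<kappa> + real CARD('n)) + 2 * real n - 1))"
    by (simp add: H_const_def ladder_nu_def[OF fin nz hp mono] algebra_simps)
  then show "dunkl_dirac Rp \<kappa> (H_fun Rp \<kappa> s P) x = (\<lambda>A. complex_of_real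
      (if even s then 2 * real s
       else 2 * (real s + (2 * gamma_k Rp \<kappa> + real CARD('n)) + 2 * real n - 1))
      * H_fun Rp \<kappa> (s - 1) P x A)"
    using dunkl_dirac_H_fun[OF fin nz hp mono assms(7)] by auto
qed

end
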